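(* Let $G$ be a $\mathbb{Z}$-weighted complete graph with $n\ge2$ vertices such that $$s\Big(\{G\}*\Big\{I\big(K_2\sqcup\textstyle\bigsqcup_{i=1}^{n-2}K_1\big)\Big\}\Big)=\{1,2,\dots,k\}$$ for some $k\ge1$ (equivalently, the set of edge weights of $G$ is exactly $\{1,\dots,k\}$). Let $l$ be the unique element of $s(\{I(K_n)\}*\{G\})$ (i.e. $l=s(G)$). Then $$\bigcup_{H} s(\{I(H)\}*\{G\})=\{0,1,\dots,l\},$$ where $H$ ranges over all simple graphs on a fixed $n$-element vertex set (spanning subgraphs of $K_n$).
   Context: Here $R=\mathbb{Z}$. An $R$-weighted complete graph $K$ is a finite vertex set with a weight $v_K(e)\in R$ on every 2-subset $e$. For such $H,G'$ with equal vertex counts and a bijection $f:V(H)\to V(G')$, $H*_fG'$ has vertex set $V(H)$ and weights $v_H(\{x,y\})v_{G'}(\{f(x),f(y)\})$; $H*G'=\{H*_fG': f \text{ bijection}\}$. $s(K)=\sum_e v_K(e)$, $s(\mathscr K)=\{s(K):K\in\mathscr K\}$. For a simple graph $H$, $I(H)$ has weight $1$ on edges and $0$ on non-edges. $K_2\sqcup\bigsqcup_{i=1}^{n-2}K_1$ is the graph on $n$ vertices with exactly one edge. *)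

theory Defs
  imports Main
begin

text \<open>An integer-weighted complete graph: a finite vertex set together with a
weight on every 2-subset (values of the weight function on other sets are irrelevant).\<close>
type_synonym 'a wgraph = "'a set \<times> ('a set \<Rightarrow> int)"

definition edges2 :: "'a set \<Rightarrow> 'a set set" where
  "edges2 V = {e. e \<subseteq> V \<and> card e = 2}"

definition wprod :: "'a wgraph \<Rightarrow> 'a wgraph \<Rightarrow> ('a \<Rightarrow> 'a) \<Rightarrow> 'a wgraph" where
  "wprod H G' f = (fst H, \<lambda>e. snd H e * snd G' (f ` e))"

definition wprods :: "'a wgraph \<Rightarrow> 'a wgraph \<Rightarrow> 'a wgraph set" where
  "wprods H G' = {wprod H G' f | f. bij_betw f (fst H) (fst G')}"

definition wprodset :: "'a wgraph set \<Rightarrow> 'a wgraph set \<Rightarrow> 'a wgraph set" where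
  "wprodset A B = (\<Union>H\<in>A. \<Union>G'\<in>B. wprods H G')"

definition wsum :: "'a wgraph \<Rightarrow> int" where
  "wsum K = (\<Sum>e\<in>edges2 (fst K). snd K e)"

definition wsums :: "'a wgraph set \<Rightarrow> int set" where
  "wsums A = wsum ` A"

definition indg :: "'a set \<Rightarrow> 'a set set \<Rightarrow> 'a wgraph" where
  "indg V E = (V, \<lambda>e. if e \<in> E then 1 else 0)"

end

theory Submission
  imports Defs "HOL-Combinatorics.Transposition"
begin

text \<open>Multiplying by I(H) and summing over a relabelling f adds up the weights of G on the
f-image of the edge set of H; as f runs over all permutations of V and H over all graphs, this
yields exactly the subset sums of the edge weights of G. Since every edge can be moved onto
{a, b}, the first hypothesis says that the edge weights form exactly the set {1..k}, and l is
their total. Subset sums of such a weighting fill the interval [0, l]: remove an edge of maximal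
weight k; the remaining weights form an interval {1..k'} with k' \<ge> k - 1, so by induction
their subset sums fill [0, S'] with S' \<ge> k - 1, and adding the removed edge fills [0, S' + k].\<close>

lemma sum_Pow_insert_interval:
  fixes w :: "'b \<Rightarrow> int"
  assumes "finite T" "e \<notin> T" "sum w ` Pow T = {0..sum w T}"
    and "0 \<le> w e" "w e \<le> sum w T + 1"
  shows "sum w ` Pow (insert e T) = {0..sum w (insert e T)}"
proof -
  have "sum w ` Pow (insert e T) = sum w ` Pow T \<union> (\<lambda>E. sum w E + w e) ` Pow T"
  proof -
    have "sum w (insert e E) = sum w E + w e" if "E \<in> Pow T" for E
      using that assms(1,2) finite_subset by (subst sum.insert) auto
    then show ?thesis
      unfolding Pow_insert image_Un image_image by (auto simp: image_iff)
  qed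
  also have "\<dots> = {0..sum w T} \<union> (\<lambda>x. x + w e) ` {0..sum w T}"
    by (simp add: assms(3) flip: image_image[of "\<lambda>x. x + w e" "sum w"])
  also have "\<dots> = {0..sum w T} \<union> {w e..sum w T + w e}"
    by simp
  also have "\<dots> = {0..sum w T + w e}"
    using assms(4,5) by auto
  finally show ?thesis
    using assms(1,2) by (simp add: add.commute)
qed

lemma sum_Pow_eq_interval:
  fixes w :: "'b \<Rightarrow> int"
  assumes "finite T" "w ` T = {1..k}"
  shows "sum w ` Pow T = {0..sum w T}"
  using assms
proof (induction "card T" arbitrary: T k rule: less_induct)
  case (less T k)
  show ?case
  proof (cases "T = {}")
    case True
    then show ?thesis by simp
  next
    case False
    then have k: "1 \<le> k"
      using less.prems(2) by (metis atLeastatMost_empty_iff2 image_is_empty not_le)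
    then obtain e where e: "e \<in> T" "w e = k"
      using less.prems(2) by (metis atLeastAtMost_iff imageE order_refl)
    define T' where "T' = T - {e}"
    have T: "T = insert e T'" "e \<notin> T'" "finite T'"
      using e less.prems(1) unfolding T'_def by auto
    have img: "insert k (w ` T') = {1..k}"
      using less.prems(2) T(1) e(2) by simp
    obtain k' where k': "w ` T' = {1..k'}" "k - 1 \<le> k'"
    proof (cases "k \<in> w ` T'")
      case True
      then show ?thesis
        using img that[of k] by (simp add: insert_absorb)
    next
      case False
      have "w ` T' = {1..k} - {k}"
        using img False by blast
      also have "\<dots> = {1..k - 1}"
        by auto
      finally show ?thesis
        by (rule that) simp
    qed
    have IH: "sum w ` Pow T' = {0..sum w T'}"
      using less.hyps[OF _ T(3) k'(1)] T less.prems(1) by (simp add: card_insert_if)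
    have pos: "0 \<le> w t" if "t \<in> T'" for t
      using that k'(1) by force
    have "k - 1 \<le> sum w T'"
    proof (cases "k - 1 \<ge> 1")
      case True
      then obtain t where "t \<in> T'" "w t = k - 1" using k' by (metis atLeastAtMost_iff imageE)
      then show ?thesis using member_le_sum[of t T' w] pos T(3) by simp
    next
      case False
      then show ?thesis using sum_nonneg[of T' w] pos by fastforce
    qed
    then show ?thesis
      using sum_Pow_insert_interval[OF T(3) T(2) IH] e(2) T(1) k by simp
  qed
qed

lemma finite_edges2: "finite V \<Longrightarrow> finite (edges2 V)"
  unfolding edges2_def by (rule finite_subset[of _ "Pow V"]) auto

lemma bij_betw_image_edges2:
  assumes "bij_betw f V W"
  shows "bij_betw ((`) f) (edges2 V) (edges2 W)"
proof (rule bij_betw_subset[OF bij_betw_Pow[OF assms]])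
  have inj: "inj_on f V" and surj: "f ` V = W"
    using assms by (auto simp: bij_betw_def)
  show "edges2 V \<subseteq> Pow V"
    by (auto simp: edges2_def)
  show "(`) f ` edges2 V = edges2 W"
  proof
    have "card (f ` e) = card e" if "e \<subseteq> V" for e
      using card_image[OF inj_on_subset[OF inj that]] .
    then show "(`) f ` edges2 V \<subseteq> edges2 W"
      using surj by (auto simp: edges2_def)
    show "edges2 W \<subseteq> (`) f ` edges2 V"
    proof
      fix e' assume "e' \<in> edges2 W"
      then have "e' \<subseteq> f ` V" "card e' = 2"
        using surj by (auto simp: edges2_def)
      then obtain e where "e \<subseteq> V" "e' = f ` e" "card e = 2"
        using inj by (metis card_image inj_on_subset subset_imageE)
      then show "e' \<in> (`) f ` edges2 V"
        unfolding edges2_def by blast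
    qed
  qed
qed

lemma bij_betw_map_pair:
  assumes "x \<in> V" "y \<in> V" "x \<noteq> y" "a \<in> V" "b \<in> V" "a \<noteq> b"
  shows "\<exists>f. bij_betw f V V \<and> f x = a \<and> f y = b"
proof -
  define p where "p = transpose x a"
  define f where "f = transpose (p y) b \<circ> p"
  have "p y \<noteq> a" "p y \<in> V"
    unfolding p_def using assms by (auto simp: transpose_def)
  moreover have "bij_betw p V V"
    unfolding p_def using assms by simp
  ultimately have "bij_betw f V V" "f x = a" "f y = b"
    unfolding f_def using assms bij_betw_trans[of p V V "transpose (p y) b"]
    by (auto simp: p_def transpose_apply_other)
  then show ?thesis by blast
qed

lemma wsum_wprod_indg_left:
  assumes "bij_betw f V W" "finite V" "E \<subseteq> edges2 V"
  shows "wsum (wprod (indg V E) (W, w) f) = sum w ((`) f ` E)"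
proof -
  have "wsum (wprod (indg V E) (W, w) f) = (\<Sum>e\<in>E. w (f ` e))"
    using assms(2,3) finite_edges2[OF assms(2)]
    by (simp add: wsum_def wprod_def indg_def of_bool_def [symmetric] Int_absorb1)
  also have "\<dots> = sum w ((`) f ` E)"
    using inj_on_subset[OF bij_betw_imp_inj_on[OF bij_betw_image_edges2[OF assms(1)]] assms(3)]
    by (simp add: sum.reindex)
  finally show ?thesis .
qed

lemma wsum_wprod_indg_right:
  assumes "finite V"
  shows "wsum (wprod (V, w) (indg W E) f) = sum w {e \<in> edges2 V. f ` e \<in> E}"
  using finite_edges2[OF assms]
  by (simp add: wsum_def wprod_def indg_def of_bool_def [symmetric] Int_def)

lemma fst_indg [simp]: "fst (indg V E) = V"
  by (simp add: indg_def)

lemma wsums_wprodset_singletons: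
  "wsums (wprodset {H} {G}) = (\<lambda>f. wsum (wprod H G f)) ` {f. bij_betw f (fst H) (fst G)}"
  unfolding wsums_def wprodset_def wprods_def by blast

lemma wsums_wprodset_single_edge:
  assumes "finite V" "a \<in> V" "b \<in> V" "a \<noteq> b"
  shows "wsums (wprodset {(V, w)} {indg V {{a, b}}}) = w ` edges2 V"
proof -
  have wsum_eq: "wsum (wprod (V, w) (indg V {{a, b}}) f) = w e"
    if f: "bij_betw f V V" and e: "e \<in> edges2 V" "f ` e = {a, b}" for f e
  proof -
    have inj: "inj_on ((`) f) (edges2 V)"
      using bij_betw_imp_inj_on[OF bij_betw_image_edges2[OF f]] .
    have "e' = e" if "e' \<in> edges2 V" "f ` e' = {a, b}" for e'
      using inj_onD[OF inj _ that(1) e(1)] that(2) e(2) by simp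
    then have "{e' \<in> edges2 V. f ` e' \<in> {{a, b}}} = {e}"
      using e by blast
    then show ?thesis
      by (simp add: wsum_wprod_indg_right[OF assms(1)])
  qed
  have "(\<lambda>f. wsum (wprod (V, w) (indg V {{a, b}}) f)) ` {f. bij_betw f V V} = w ` edges2 V"
  proof (intro equalityI subsetI)
    fix s assume "s \<in> (\<lambda>f. wsum (wprod (V, w) (indg V {{a, b}}) f)) ` {f. bij_betw f V V}"
    then obtain f where f: "bij_betw f V V" and s: "s = wsum (wprod (V, w) (indg V {{a, b}}) f)"
      by blast
    have "{a, b} \<in> (`) f ` edges2 V"
      using bij_betw_imp_surj_on[OF bij_betw_image_edges2[OF f]] assms(2-4)
      by (simp add: edges2_def)
    then obtain e where "e \<in> edges2 V" "f ` e = {a, b}"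
      by blast
    then show "s \<in> w ` edges2 V"
      using wsum_eq[OF f] s by simp
  next
    fix s assume "s \<in> w ` edges2 V"
    then obtain e where e: "e \<in> edges2 V" and s: "s = w e"
      by blast
    then obtain x y where xy: "e = {x, y}" "x \<noteq> y" "x \<in> V" "y \<in> V"
      by (auto simp: edges2_def card_2_iff)
    then obtain f where f: "bij_betw f V V" "f x = a" "f y = b"
      using bij_betw_map_pair[OF _ _ _ assms(2-4)] by blast
    then have "s = wsum (wprod (V, w) (indg V {{a, b}}) f)"
      using wsum_eq[OF f(1) e] xy s by simp
    then show "s \<in> (\<lambda>f. wsum (wprod (V, w) (indg V {{a, b}}) f)) ` {f. bij_betw f V V}"
      using f(1) by blast
  qed
  then show ?thesis
    by (simp add: wsums_wprodset_singletons)
qed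

lemma wsums_wprodset_indg:
  assumes "finite V" "E \<subseteq> edges2 V"
  shows "wsums (wprodset {indg V E} {(V, w)}) = (\<lambda>f. sum w ((`) f ` E)) ` {f. bij_betw f V V}"
  using wsum_wprod_indg_left[OF _ assms] by (simp add: wsums_wprodset_singletons)

lemma UN_wsums_wprodset_indg:
  assumes "finite V"
  shows "(\<Union>E\<in>Pow (edges2 V). wsums (wprodset {indg V E} {(V, w)})) = sum w ` Pow (edges2 V)"
proof (intro equalityI subsetI)
  fix s assume "s \<in> (\<Union>E\<in>Pow (edges2 V). wsums (wprodset {indg V E} {(V, w)}))"
  then obtain E where E: "E \<subseteq> edges2 V" and "s \<in> wsums (wprodset {indg V E} {(V, w)})"
    by blast
  then obtain f where f: "bij_betw f V V" and s: "s = sum w ((`) f ` E)"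
    unfolding wsums_wprodset_indg[OF assms E] by blast
  have "(`) f ` E \<subseteq> edges2 V"
    using bij_betw_imp_surj_on[OF bij_betw_image_edges2[OF f]] E by blast
  then show "s \<in> sum w ` Pow (edges2 V)"
    using s by blast
next
  fix s assume "s \<in> sum w ` Pow (edges2 V)"
  then obtain E where E: "E \<subseteq> edges2 V" and s: "s = sum w E"
    by blast
  have "s \<in> wsums (wprodset {indg V E} {(V, w)})"
    unfolding wsums_wprodset_indg[OF assms E] s by (rule image_eqI[where x = id]) auto
  then show "s \<in> (\<Union>E\<in>Pow (edges2 V). wsums (wprodset {indg V E} {(V, w)}))"
    using E by blast
qed

theorem mainTheorem12:
  fixes V :: "'a set" and w :: "'a set \<Rightarrow> int" and n :: nat and k :: nat
    and a b :: 'a and l :: int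
  assumes "finite V" and "card V = n" and "n \<ge> 2"
    and "a \<in> V" and "b \<in> V" and "a \<noteq> b"
    and "k \<ge> 1"
    and "wsums (wprodset {(V, w)} {indg V {{a, b}}}) = int ` {1..k}"
    and "wsums (wprodset {indg V (edges2 V)} {(V, w)}) = {l}"
  shows "(\<Union>E\<in>Pow (edges2 V). wsums (wprodset {indg V E} {(V, w)})) = {0..l}"
proof -
  have weights: "w ` edges2 V = {1..int k}"
    using assms(8) wsums_wprodset_single_edge[OF assms(1,4-6)]
    by (simp add: image_int_atLeastAtMost)
  have "sum w (edges2 V) \<in> {l}"
    unfolding assms(9)[symmetric] wsums_wprodset_indg[OF assms(1) order_refl]
    by (rule image_eqI[where x = id]) auto
  then have "l = sum w (edges2 V)"
    by simp
  then show ?thesis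
    using UN_wsums_wprodset_indg[OF assms(1)]
      sum_Pow_eq_interval[OF finite_edges2[OF assms(1)] weights]
    by simp
qed

end
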